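(* Let $G$ be a group and $\mathcal S$ a stable admissible family of subgroups of $G$. Then the monoid $\widehat G_{\mathcal S}$ is a group.
   Context: An admissible family of subgroups of $G$ is a family $\mathcal S$ closed under conjugation such that the intersection of any finitely many members contains a member. It is stable if for all $K\le H$ in $\mathcal S$ there is $L\in\mathcal S$ with $L\le K$ and $L$ normal in $H$. $\widehat G_{\mathcal S}$ is the set of functions $f$ assigning to each $H\in\mathcal S$ a right coset $f(H)\in H\backslash G$ such that $f(K)\subseteq f(H)$ whenever $K\subseteq H$ are in $\mathcal S$ (i.e. $\widehat G_{\mathcal S}=\varprojlim H\backslash G$). For $f\in\widehat G_{\mathcal S}$ and $H\in\mathcal S$, write $H^f:=x^{-1}Hx$ where $f(H)=Hx$ (independent of the choice of $x$). The product is $(f\cdot f')(H)=f(H)\,f'(H^f)$ (product of subsets of $G$), which is associative with identity $e(H)=H$, making $\widehat G_{\mathcal S}$ a monoid. *)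

theory Defs
  imports "HOL-Algebra.Algebra"
begin

definition conjugate :: "('a, 'b) monoid_scheme \<Rightarrow> 'a set \<Rightarrow> 'a \<Rightarrow> 'a set" where
  "conjugate G H x = (inv\<^bsub>G\<^esub> x) <#\<^bsub>G\<^esub> H #>\<^bsub>G\<^esub> x"

definition admissible_family :: "('a, 'b) monoid_scheme \<Rightarrow> 'a set set \<Rightarrow> bool" where
  "admissible_family G S \<longleftrightarrow>
     (\<forall>H\<in>S. subgroup H G) \<and>
     (\<forall>H\<in>S. \<forall>x\<in>carrier G. conjugate G H x \<in> S) \<and>
     (\<forall>F. finite F \<and> F \<noteq> {} \<and> F \<subseteq> S \<longrightarrow> (\<exists>L\<in>S. L \<subseteq> \<Inter>F))"

definition stable_family :: "('a, 'b) monoid_scheme \<Rightarrow> 'a set set \<Rightarrow> bool" where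
  "stable_family G S \<longleftrightarrow>
     (\<forall>K\<in>S. \<forall>H\<in>S. K \<subseteq> H \<longrightarrow> (\<exists>L\<in>S. L \<subseteq> K \<and> L \<lhd> (G\<lparr>carrier := H\<rparr>)))"

text \<open>Elements of the inverse limit of the right coset spaces H\G, H in S.
  Functions are taken extensional: undefined outside S.\<close>
definition completion :: "('a, 'b) monoid_scheme \<Rightarrow> 'a set set \<Rightarrow> ('a set \<Rightarrow> 'a set) set" where
  "completion G S = {f. (\<forall>H\<in>S. f H \<in> rcosets\<^bsub>G\<^esub> H)
                      \<and> (\<forall>H\<in>S. \<forall>K\<in>S. K \<subseteq> H \<longrightarrow> f K \<subseteq> f H)
                      \<and> (\<forall>H. H \<notin> S \<longrightarrow> f H = undefined)}"

text \<open>H^f = x^{-1} H x where f(H) = Hx.\<close>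
definition conj_by :: "('a, 'b) monoid_scheme \<Rightarrow> ('a set \<Rightarrow> 'a set) \<Rightarrow> 'a set \<Rightarrow> 'a set" where
  "conj_by G f H = conjugate G H (SOME x. x \<in> carrier G \<and> f H = H #>\<^bsub>G\<^esub> x)"

definition completion_mult ::
  "('a, 'b) monoid_scheme \<Rightarrow> 'a set set \<Rightarrow> ('a set \<Rightarrow> 'a set) \<Rightarrow> ('a set \<Rightarrow> 'a set) \<Rightarrow> ('a set \<Rightarrow> 'a set)" where
  "completion_mult G S f f' = (\<lambda>H. if H \<in> S then f H <#>\<^bsub>G\<^esub> f' (conj_by G f H) else undefined)"

definition completion_monoid :: "('a, 'b) monoid_scheme \<Rightarrow> 'a set set \<Rightarrow> ('a set \<Rightarrow> 'a set) monoid" where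
  "completion_monoid G S = \<lparr> carrier = completion G S,
                             monoid.mult = completion_mult G S,
                             one = (\<lambda>H. if H \<in> S then H else undefined) \<rparr>"

end

theory Submission
  imports Defs
begin

text \<open>
  Writing \<open>f(H) = Hx\<close>, the product of the completion becomes \<open>(f f')(H) = H x y\<close> where
  \<open>f'(x\<^sup>-\<^sup>1 H x) = x\<^sup>-\<^sup>1 H x y\<close>, so associativity and the unit laws reduce to computations
  with cosets. For the inverse of \<open>f\<close>, stability provides, for each \<open>K\<close> in \<open>S\<close>, some \<open>L\<close> in
  \<open>S\<close> with \<open>L\<^sup>f \<subseteq> K\<close>: if \<open>f(K) = Kx\<close>, take \<open>L\<close> normal in \<open>K\<close> and contained in
  \<open>K \<inter> x K x\<^sup>-\<^sup>1\<close>; then \<open>f(L) = L k x\<close> with \<open>k \<in> K\<close>, hence \<open>L\<^sup>f = x\<^sup>-\<^sup>1 L x \<subseteq> K\<close>.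
  Setting \<open>g(K) = K x\<^sub>L\<^sup>-\<^sup>1\<close> for \<open>f(L) = L x\<^sub>L\<close> is independent of the choice of \<open>L\<close>
  (pass to a common smaller member of \<open>S\<close>), defines an element of the completion, and satisfies
  \<open>g f = e\<close>. A monoid in which every element has a left inverse is a group.
\<close>

context group
begin

lemma conjugate_mono: "K \<subseteq> H \<Longrightarrow> conjugate G K x \<subseteq> conjugate G H x"
  by (auto simp: conjugate_def l_coset_def r_coset_def)

lemma conjugate_one: "H \<subseteq> carrier G \<Longrightarrow> conjugate G H \<one> = H"
  by (simp add: conjugate_def lcos_mult_one)

lemma conjugate_conjugate:
  assumes "H \<subseteq> carrier G" "x \<in> carrier G" "y \<in> carrier G"
  shows "conjugate G (conjugate G H x) y = conjugate G H (x \<otimes> y)"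
  using assms by (simp add: conjugate_def coset_assoc lcos_m_assoc coset_mult_assoc
      l_coset_subset_G r_coset_subset_G inv_mult_group)

lemma subgroup_conjugate: "subgroup H G \<Longrightarrow> x \<in> carrier G \<Longrightarrow> subgroup (conjugate G H x) G"
  unfolding conjugate_def by (rule subgroup_conjugation_is_surj1)

lemma conjugate_by_member: "subgroup H G \<Longrightarrow> h \<in> H \<Longrightarrow> conjugate G H h = H"
  by (simp add: conjugate_def coset_join2 coset_join3 subgroup.mem_carrier subgroup.m_inv_closed)

lemma conjugate_eq_if_rcos_eq:
  assumes "subgroup H G" "x \<in> carrier G" "y \<in> carrier G" "H #> x = H #> y"
  shows "conjugate G H x = conjugate G H y"
proof -
  obtain h where h: "h \<in> H" "y = h \<otimes> x"
    using repr_independenceD[OF assms(1,3,4)] by (auto simp: r_coset_def)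
  then have "conjugate G H y = conjugate G (conjugate G H h) x"
    using assms by (simp add: conjugate_conjugate subgroup.subset subgroup.mem_carrier)
  then show ?thesis
    using assms(1) h(1) by (simp add: conjugate_by_member)
qed

lemma conjugate_normal_eq:
  assumes "L \<lhd> G\<lparr>carrier := K\<rparr>" "subgroup K G" "k \<in> K"
  shows "conjugate G L k = L"
proof -
  have "L #> k = k <#\<^bsub>G\<^esub> L"
    using normal.coset_eq[OF assms(1)] assms(3) by simp
  moreover have "L \<subseteq> K"
    using subgroup.subset[OF normal_imp_subgroup[OF assms(1)]] by simp
  moreover have "k \<in> carrier G" "K \<subseteq> carrier G"
    using assms(2,3) by (auto simp: subgroup.mem_carrier subgroup.subset)
  ultimately show ?thesis
    by (simp add: conjugate_def coset_assoc[symmetric] lcos_m_assoc lcos_mult_one)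
qed

lemma rcos_mult_conjugate_rcos:
  assumes "subgroup H G" "x \<in> carrier G" "y \<in> carrier G"
  shows "(H #> x) <#> (conjugate G H x #> y) = H #> (x \<otimes> y)"
proof -
  have H: "H \<subseteq> carrier G" using assms(1) by (rule subgroup.subset)
  have "x <#\<^bsub>G\<^esub> (conjugate G H x #> y) = H #> (x \<otimes> y)"
    using H assms(2,3) by (simp add: conjugate_def coset_assoc lcos_m_assoc coset_mult_assoc
        l_coset_subset_G r_coset_subset_G lcos_mult_one)
  moreover have "conjugate G H x #> y \<subseteq> carrier G"
    using assms by (simp add: r_coset_subset_G subgroup.subset subgroup_conjugate)
  ultimately have "(H #> x) <#> (conjugate G H x #> y) = H <#> (H #> (x \<otimes> y))"
    using H assms(2) by (simp add: rcos_assoc_lcos)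
  also have "\<dots> = (H <#> H) #> (x \<otimes> y)"
    using H assms(2,3) by (simp add: setmult_rcos_assoc)
  finally show ?thesis
    using assms(1) by (simp add: subgroup_mult_id)
qed

lemma set_inv_rcos:
  assumes "subgroup L G" "x \<in> carrier G"
  shows "set_inv (L #> x) = inv x <# L"
proof
  show "set_inv (L #> x) \<subseteq> inv x <# L"
  proof
    fix z assume "z \<in> set_inv (L #> x)"
    then obtain l where "l \<in> L" "z = inv (l \<otimes> x)"
      by (auto simp: SET_INV_def r_coset_def)
    then show "z \<in> inv x <# L"
      using assms by (auto simp: l_coset_def inv_mult_group subgroup.mem_carrier subgroup.m_inv_closed)
  qed
  show "inv x <# L \<subseteq> set_inv (L #> x)"
  proof
    fix z assume "z \<in> inv x <# L"
    then obtain l where l: "l \<in> L" "z = inv x \<otimes> l"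
      by (auto simp: l_coset_def)
    then have "z = inv (inv l \<otimes> x)"
      using assms by (simp add: inv_mult_group subgroup.mem_carrier)
    then show "z \<in> set_inv (L #> x)"
      using l(1) assms(1) by (auto simp: SET_INV_def r_coset_def subgroup.m_inv_closed)
  qed
qed

lemma set_mult_set_inv_rcos:
  assumes "subgroup L G" "subgroup K G" "x \<in> carrier G" "conjugate G L x \<subseteq> K"
  shows "K <#> set_inv (L #> x) = K #> inv x"
proof -
  have L: "L \<subseteq> carrier G" using assms(1) by (rule subgroup.subset)
  have C: "conjugate G L x \<subseteq> carrier G"
    using assms(1,3) by (simp add: subgroup.subset subgroup_conjugate)
  have "set_inv (L #> x) = conjugate G L x #> inv x"
    using L assms(1,3) by (simp add: set_inv_rcos conjugate_def coset_mult_assoc l_coset_subset_G)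
  then have "K <#> set_inv (L #> x) = (K <#> conjugate G L x) #> inv x"
    using C assms(2,3) by (simp add: setmult_rcos_assoc subgroup.subset)
  also have "\<dots> = K #> inv x"
    using assms by (simp add: set_mult_subgroup_idem subgroup_incl subgroup_conjugate)
  finally show ?thesis .
qed

end

locale admissible_subgroup_family = group G for G (structure) +
  fixes S :: "'a set set"
  assumes admissible: "admissible_family G S"
begin

lemma family_subgroup: "H \<in> S \<Longrightarrow> subgroup H G"
  using admissible by (simp add: admissible_family_def)

lemma family_conjugate: "H \<in> S \<Longrightarrow> x \<in> carrier G \<Longrightarrow> conjugate G H x \<in> S"
  using admissible by (simp add: admissible_family_def)

lemma family_lower_bound:
  assumes "A \<in> S" "B \<in> S"
  obtains L where "L \<in> S" "L \<subseteq> A" "L \<subseteq> B"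
proof -
  have "finite {A, B} \<and> {A, B} \<noteq> {} \<and> {A, B} \<subseteq> S"
    using assms by auto
  then obtain L where "L \<in> S" "L \<subseteq> \<Inter>{A, B}"
    using admissible unfolding admissible_family_def by meson
  then show ?thesis
    using that by auto
qed

lemma completion_rcosE:
  assumes "f \<in> completion G S" "H \<in> S"
  obtains x where "x \<in> carrier G" "f H = H #> x"
  using assms by (auto simp: completion_def RCOSETS_def)

lemma completion_mono:
  "f \<in> completion G S \<Longrightarrow> K \<in> S \<Longrightarrow> H \<in> S \<Longrightarrow> K \<subseteq> H \<Longrightarrow> f K \<subseteq> f H"
  by (simp add: completion_def)

lemma completion_undefined: "f \<in> completion G S \<Longrightarrow> H \<notin> S \<Longrightarrow> f H = undefined"
  by (simp add: completion_def)

lemma completion_rcos_of_subset: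
  assumes f: "f \<in> completion G S" and "K \<in> S" "H \<in> S" "K \<subseteq> H"
    and x: "x \<in> carrier G" "f K = K #> x"
  shows "f H = H #> x"
proof -
  obtain y where y: "y \<in> carrier G" "f H = H #> y"
    using f \<open>H \<in> S\<close> by (rule completion_rcosE)
  have "x \<in> f K"
    using x family_subgroup[OF \<open>K \<in> S\<close>] by (simp add: rcos_self)
  then have "x \<in> H #> y"
    using completion_mono[OF f \<open>K \<in> S\<close> \<open>H \<in> S\<close> \<open>K \<subseteq> H\<close>] y(2) by blast
  then show ?thesis
    using repr_independence[of x H y] y family_subgroup[OF \<open>H \<in> S\<close>] by simp
qed

lemma conj_by_rcos:
  assumes "f \<in> completion G S" "H \<in> S" "x \<in> carrier G" "f H = H #> x"
  shows "conj_by G f H = conjugate G H x"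
proof -
  define y where "y = (SOME y. y \<in> carrier G \<and> f H = H #> y)"
  have "\<exists>y. y \<in> carrier G \<and> f H = H #> y"
    using assms(3,4) by blast
  then have y: "y \<in> carrier G \<and> f H = H #> y"
    unfolding y_def by (rule someI_ex)
  then have "H #> y = H #> x"
    using assms(4) by simp
  have "conj_by G f H = conjugate G H y"
    by (simp add: conj_by_def y_def)
  also have "\<dots> = conjugate G H x"
    using family_subgroup[OF assms(2)] conjunct1[OF y] assms(3) \<open>H #> y = H #> x\<close>
    by (rule conjugate_eq_if_rcos_eq)
  finally show ?thesis .
qed

lemma conj_by_in_family: "f \<in> completion G S \<Longrightarrow> H \<in> S \<Longrightarrow> conj_by G f H \<in> S"
  by (metis completion_rcosE conj_by_rcos family_conjugate)

lemma conj_by_mono: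
  assumes f: "f \<in> completion G S" and "K \<in> S" "H \<in> S" "K \<subseteq> H"
  shows "conj_by G f K \<subseteq> conj_by G f H"
proof -
  obtain x where x: "x \<in> carrier G" "f K = K #> x"
    using f \<open>K \<in> S\<close> by (rule completion_rcosE)
  have "f H = H #> x"
    using f \<open>K \<in> S\<close> \<open>H \<in> S\<close> \<open>K \<subseteq> H\<close> x by (rule completion_rcos_of_subset)
  with f \<open>H \<in> S\<close> x(1) have "conj_by G f H = conjugate G H x"
    by (rule conj_by_rcos)
  moreover have "conj_by G f K = conjugate G K x"
    using f \<open>K \<in> S\<close> x by (rule conj_by_rcos)
  ultimately show ?thesis
    using \<open>K \<subseteq> H\<close> by (simp add: conjugate_mono)
qed

lemma completion_mult_rcos:
  assumes "f \<in> completion G S" "H \<in> S" "x \<in> carrier G" "f H = H #> x"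
    and "y \<in> carrier G" "f' (conjugate G H x) = conjugate G H x #> y"
  shows "completion_mult G S f f' H = H #> (x \<otimes> y)"
  using assms by (simp add: completion_mult_def conj_by_rcos rcos_mult_conjugate_rcos family_subgroup)

lemma completion_mult_closed:
  assumes f: "f \<in> completion G S" and f': "f' \<in> completion G S"
  shows "completion_mult G S f f' \<in> completion G S"
  unfolding completion_def
proof (intro CollectI conjI ballI allI impI)
  fix H assume H: "H \<in> S"
  obtain x where x: "x \<in> carrier G" "f H = H #> x"
    using f H by (rule completion_rcosE)
  obtain y where y: "y \<in> carrier G" "f' (conjugate G H x) = conjugate G H x #> y"
    using f' family_conjugate[OF H x(1)] by (rule completion_rcosE)
  show "completion_mult G S f f' H \<in> rcosets H"
    using completion_mult_rcos[where f' = f', OF f H x y] H x(1) y(1)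
    by (simp add: rcosetsI family_subgroup subgroup.subset)
next
  fix H K assume "H \<in> S" "K \<in> S" "K \<subseteq> H"
  then have "f' (conj_by G f K) \<subseteq> f' (conj_by G f H)"
    using f f' by (simp add: completion_mono conj_by_in_family conj_by_mono)
  then show "completion_mult G S f f' K \<subseteq> completion_mult G S f f' H"
    using \<open>H \<in> S\<close> \<open>K \<in> S\<close> \<open>K \<subseteq> H\<close> f
    by (simp add: completion_mult_def completion_mono mono_set_mult)
qed (simp add: completion_mult_def)

lemma completion_mult_assoc:
  assumes f: "f \<in> completion G S" and f': "f' \<in> completion G S" and f'': "f'' \<in> completion G S"
  shows "completion_mult G S (completion_mult G S f f') f'' =
    completion_mult G S f (completion_mult G S f' f'')"
proof
  fix H
  show "completion_mult G S (completion_mult G S f f') f'' H =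
    completion_mult G S f (completion_mult G S f' f'') H"
  proof (cases "H \<in> S")
    case H: True
    obtain x where x: "x \<in> carrier G" "f H = H #> x"
      using f H by (rule completion_rcosE)
    define K where "K = conjugate G H x"
    have K: "K \<in> S"
      using H x(1) by (simp add: K_def family_conjugate)
    obtain y where y: "y \<in> carrier G" "f' K = K #> y"
      using f' K by (rule completion_rcosE)
    obtain z where z: "z \<in> carrier G" "f'' (conjugate G K y) = conjugate G K y #> z"
      using f'' family_conjugate[OF K y(1)] by (rule completion_rcosE)
    have xy: "completion_mult G S f f' H = H #> (x \<otimes> y)"
      using completion_mult_rcos[OF f H x y(1)] y(2) by (simp add: K_def)
    have "conjugate G H (x \<otimes> y) = conjugate G K y"
      using H x(1) y(1) by (simp add: K_def conjugate_conjugate family_subgroup subgroup.subset)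
    then have "completion_mult G S (completion_mult G S f f') f'' H = H #> (x \<otimes> y \<otimes> z)"
      using completion_mult_rcos[OF completion_mult_closed[OF f f'] H _ xy] x(1) y(1) z by simp
    moreover have "completion_mult G S f (completion_mult G S f' f'') H = H #> (x \<otimes> (y \<otimes> z))"
      using completion_mult_rcos[OF f H x, of "y \<otimes> z"] completion_mult_rcos[where f' = f'', OF f' K y z] y(1) z(1)
      by (simp add: K_def)
    ultimately show ?thesis
      using x(1) y(1) z(1) by (simp add: m_assoc)
  qed (simp add: completion_mult_def)
qed

lemma carrier_completion_monoid [simp]: "carrier (completion_monoid G S) = completion G S"
  by (simp add: completion_monoid_def)

lemma mult_completion_monoid [simp]: "f \<otimes>\<^bsub>completion_monoid G S\<^esub> f' = completion_mult G S f f'"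
  by (simp add: completion_monoid_def)

lemma one_completion_monoid_rcos: "H \<in> S \<Longrightarrow> \<one>\<^bsub>completion_monoid G S\<^esub> H = H #> \<one>"
  by (simp add: completion_monoid_def family_subgroup subgroup.subset)

lemma one_completion_monoid_undefined: "H \<notin> S \<Longrightarrow> \<one>\<^bsub>completion_monoid G S\<^esub> H = undefined"
  by (simp add: completion_monoid_def)

lemma one_completion_monoid_closed: "\<one>\<^bsub>completion_monoid G S\<^esub> \<in> completion G S"
proof -
  have "H \<in> rcosets H" if "H \<in> S" for H
    using rcosetsI[of H \<one>] that by (simp add: family_subgroup subgroup.subset)
  then show ?thesis
    by (auto simp: completion_def completion_monoid_def)
qed

lemma completion_mult_one_left:
  assumes f: "f \<in> completion G S"
  shows "completion_mult G S \<one>\<^bsub>completion_monoid G S\<^esub> f = f"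
proof
  fix H
  show "completion_mult G S \<one>\<^bsub>completion_monoid G S\<^esub> f H = f H"
  proof (cases "H \<in> S")
    case H: True
    obtain y where y: "y \<in> carrier G" "f H = H #> y"
      using f H by (rule completion_rcosE)
    then have "f (conjugate G H \<one>) = conjugate G H \<one> #> y"
      using H by (simp add: conjugate_one family_subgroup subgroup.subset)
    then show ?thesis
      using completion_mult_rcos[OF one_completion_monoid_closed H one_closed
          one_completion_monoid_rcos[OF H] y(1)] y by simp
  qed (simp add: completion_mult_def completion_undefined[OF f])
qed

lemma completion_mult_one_right:
  assumes f: "f \<in> completion G S"
  shows "completion_mult G S f \<one>\<^bsub>completion_monoid G S\<^esub> = f"
proof
  fix H
  show "completion_mult G S f \<one>\<^bsub>completion_monoid G S\<^esub> H = f H"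
  proof (cases "H \<in> S")
    case H: True
    obtain x where x: "x \<in> carrier G" "f H = H #> x"
      using f H by (rule completion_rcosE)
    then show ?thesis
      using completion_mult_rcos[OF f H x one_closed] H
      by (simp add: one_completion_monoid_rcos family_conjugate)
  qed (simp add: completion_mult_def completion_undefined[OF f])
qed

theorem completion_monoid_is_monoid: "monoid (completion_monoid G S)"
  by (rule monoidI) (simp_all add: completion_mult_closed one_completion_monoid_closed
      completion_mult_assoc completion_mult_one_left completion_mult_one_right)

end

locale stable_subgroup_family = admissible_subgroup_family +
  assumes stable: "stable_family G S"
begin

lemma exists_conj_by_subset:
  assumes f: "f \<in> completion G S" and K: "K \<in> S"
  obtains L where "L \<in> S" "conj_by G f L \<subseteq> K"
proof -
  obtain x where x: "x \<in> carrier G" "f K = K #> x"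
    using f K by (rule completion_rcosE)
  obtain N where N: "N \<in> S" "N \<subseteq> K" "N \<subseteq> conjugate G K (inv x)"
    using K family_conjugate[OF K inv_closed[OF x(1)]] by (rule family_lower_bound)
  obtain L where L: "L \<in> S" "L \<subseteq> N" "L \<lhd> G\<lparr>carrier := K\<rparr>"
    using stable N(1,2) K unfolding stable_family_def by blast
  obtain y where y: "y \<in> carrier G" "f L = L #> y"
    using f L(1) by (rule completion_rcosE)
  have "y \<in> f K"
    using completion_mono[OF f L(1) K] L(2) N(2) y rcos_self[OF y(1) family_subgroup[OF L(1)]] by blast
  then obtain k where k: "k \<in> K" "y = k \<otimes> x"
    using x(2) by (auto simp: r_coset_def)
  have K_sub: "K \<subseteq> carrier G" "k \<in> carrier G"
    using subgroup.subset[OF family_subgroup[OF K]] k(1) by auto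
  have L_sub: "L \<subseteq> carrier G"
    using L(2) N(2) K_sub(1) by blast
  \<comment> \<open>The factor \<open>k \<in> K\<close> of the representative is absorbed since \<open>L\<close> is normal in \<open>K\<close>.\<close>
  have "conj_by G f L = conjugate G (conjugate G L k) x"
    using conj_by_rcos[OF f L(1) y] k(2) L_sub K_sub(2) x(1) by (simp add: conjugate_conjugate)
  also have "\<dots> = conjugate G L x"
    using L(3) family_subgroup[OF K] k(1) by (simp add: conjugate_normal_eq)
  also have "\<dots> \<subseteq> conjugate G (conjugate G K (inv x)) x"
    using L(2) N(3) by (intro conjugate_mono) blast
  also have "\<dots> = K"
    using K_sub(1) x(1) by (simp add: conjugate_conjugate conjugate_one)
  finally show ?thesis
    using L(1) that by blast
qed

definition completion_inv :: "('a set \<Rightarrow> 'a set) \<Rightarrow> 'a set \<Rightarrow> 'a set" where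
  "completion_inv f =
    (\<lambda>K. if K \<in> S then K <#> set_inv (f (SOME L. L \<in> S \<and> conj_by G f L \<subseteq> K)) else undefined)"

lemma set_mult_set_inv_completion:
  assumes f: "f \<in> completion G S" and "K \<in> S" "L \<in> S" "conj_by G f L \<subseteq> K"
    and x: "x \<in> carrier G" "f L = L #> x"
  shows "K <#> set_inv (f L) = K #> inv x"
  using assms conj_by_rcos[OF f \<open>L \<in> S\<close> x]
  by (simp add: set_mult_set_inv_rcos family_subgroup)

lemma completion_inv_rcos:
  assumes f: "f \<in> completion G S" and K: "K \<in> S" and L: "L \<in> S" "conj_by G f L \<subseteq> K"
    and x: "x \<in> carrier G" "f L = L #> x"
  shows "completion_inv f K = K #> inv x"
proof -
  define L' where "L' = (SOME L. L \<in> S \<and> conj_by G f L \<subseteq> K)"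
  have L': "L' \<in> S" "conj_by G f L' \<subseteq> K"
    unfolding L'_def using someI_ex[where P = "\<lambda>L. L \<in> S \<and> conj_by G f L \<subseteq> K"] L by blast+
  obtain M where M: "M \<in> S" "M \<subseteq> L" "M \<subseteq> L'"
    using L(1) L'(1) by (rule family_lower_bound)
  obtain z where z: "z \<in> carrier G" "f M = M #> z"
    using f M(1) by (rule completion_rcosE)
  have "completion_inv f K = K <#> set_inv (f L')"
    using K by (simp add: completion_inv_def L'_def)
  also have "\<dots> = K #> inv z"
    using set_mult_set_inv_completion[OF f K L' z(1)]
      completion_rcos_of_subset[OF f M(1) L'(1) M(3) z] by blast
  also have "\<dots> = K <#> set_inv (f L)"
    using set_mult_set_inv_completion[OF f K L z(1)]
      completion_rcos_of_subset[OF f M(1) L(1) M(2) z] by simp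
  also have "\<dots> = K #> inv x"
    using set_mult_set_inv_completion[OF f K L x] .
  finally show ?thesis .
qed

lemma completion_inv_closed:
  assumes f: "f \<in> completion G S"
  shows "completion_inv f \<in> completion G S"
  unfolding completion_def
proof (intro CollectI conjI ballI allI impI)
  fix K assume K: "K \<in> S"
  obtain L where L: "L \<in> S" "conj_by G f L \<subseteq> K"
    using f K by (rule exists_conj_by_subset)
  obtain x where x: "x \<in> carrier G" "f L = L #> x"
    using f L(1) by (rule completion_rcosE)
  show "completion_inv f K \<in> rcosets K"
    using completion_inv_rcos[OF f K L x] K x(1) by (simp add: rcosetsI family_subgroup subgroup.subset)
next
  fix H K assume H: "H \<in> S" and K: "K \<in> S" and "K \<subseteq> H"
  obtain L where L: "L \<in> S" "conj_by G f L \<subseteq> K"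
    using f K by (rule exists_conj_by_subset)
  obtain x where x: "x \<in> carrier G" "f L = L #> x"
    using f L(1) by (rule completion_rcosE)
  have "completion_inv f H = H #> inv x"
    using L \<open>K \<subseteq> H\<close> by (intro completion_inv_rcos[OF f H L(1) _ x]) blast
  then show "completion_inv f K \<subseteq> completion_inv f H"
    using completion_inv_rcos[OF f K L x] \<open>K \<subseteq> H\<close> by (auto simp: r_coset_def)
qed (simp add: completion_inv_def)

lemma completion_mult_inv_left:
  assumes f: "f \<in> completion G S"
  shows "completion_mult G S (completion_inv f) f = \<one>\<^bsub>completion_monoid G S\<^esub>"
proof
  fix K
  show "completion_mult G S (completion_inv f) f K = \<one>\<^bsub>completion_monoid G S\<^esub> K"
  proof (cases "K \<in> S")
    case K: True
    obtain L where L: "L \<in> S" "conj_by G f L \<subseteq> K"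
      using f K by (rule exists_conj_by_subset)
    obtain x where x: "x \<in> carrier G" "f L = L #> x"
      using f L(1) by (rule completion_rcosE)
    have K_sub: "K \<subseteq> carrier G" and L_sub: "L \<subseteq> carrier G"
      using K L(1) by (simp_all add: family_subgroup subgroup.subset)
    have "L = conjugate G (conjugate G L x) (inv x)"
      using L_sub x(1) by (simp add: conjugate_conjugate conjugate_one)
    also have "\<dots> \<subseteq> conjugate G K (inv x)"
      using L(2) conj_by_rcos[OF f L(1) x] by (simp add: conjugate_mono)
    finally have "f (conjugate G K (inv x)) = conjugate G K (inv x) #> x"
      using completion_rcos_of_subset[OF f L(1) family_conjugate[OF K inv_closed[OF x(1)]] _ x] by blast
    then have "completion_mult G S (completion_inv f) f K = K #> (inv x \<otimes> x)"
      using completion_mult_rcos[OF completion_inv_closed[OF f] K inv_closed[OF x(1)]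
          completion_inv_rcos[OF f K L x] x(1)] by simp
    then show ?thesis
      using K K_sub x(1) by (simp add: one_completion_monoid_rcos)
  qed (simp add: completion_mult_def one_completion_monoid_undefined)
qed

theorem completion_monoid_is_group: "group (completion_monoid G S)"
  by (rule monoid.group_l_invI[OF completion_monoid_is_monoid])
    (auto intro: completion_inv_closed completion_mult_inv_left)

end

theorem lemma6p2:
  fixes G :: "('a, 'b) monoid_scheme" and S :: "'a set set"
  assumes "group G"
    and "admissible_family G S"
    and "stable_family G S"
  shows "group (completion_monoid G S)"
proof -
  interpret stable_subgroup_family G S
    using assms by (intro stable_subgroup_family.intro admissible_subgroup_family.intro
        admissible_subgroup_family_axioms.intro stable_subgroup_family_axioms.intro)
  show ?thesis
    by (rule completion_monoid_is_group)
qed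

end
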